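(* For all $n\ge0$ and complex parameters, with the convention $E_{n,k}=0$ if $k<0$, $k>n$ or $n<0$: (i) $E_{n,k}(a,b;c_0+a,c_\infty-a)=E_{n,k}+an\,(E_{n-1,k}-E_{n-1,k-1})$, where every number on the right has parameters $(a,b;c_0,c_\infty)$, for $0\le k\le n$; (ii) $E_{n,k}(a,b;c_0+b,-c_0)=E_{n,k+1}(a,b;c_0,b-c_0)+(-1)^k(c_0)^{\underline n,a}\binom{n+1}{k+1}$ for $-1\le k\le n$; (iii) $c_\infty\,E_{n,k}(a,b;b-a,c_\infty+a)=E_{n+1,k+1}(a,b;0,c_\infty)$ for $-1\le k\le n$; (iv) $c_0\,E_{n,k}(a,b;c_0-a,a+b)=E_{n+1,k}(a,b;c_0,0)$ for $0\le k\le n$; (v) $c\,[E_{n,k+1}(a,b;c-a,a-c)-E_{n,k}(a,b;c-a,a-c)]=E_{n+1,k+1}(a,b;c,-c)$ for $-1\le k\le n$.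
   Context: Generalized Eulerian numbers $E_{n,k}(a,b;c_0,c_\infty)$: defined by $E_{0,0}=1$, $E_{n,k}=0$ if $n<0$, $k<0$ or $k>n$, and $E_{n+1,k+1}=[-an+b(k+1)+c_0]E_{n,k+1}+[(a+b)n-bk+c_\infty]E_{n,k}$ for $n\ge0$, $k\in\mathbb Z$. $(x)^{\underline n,a}=\prod_{i=0}^{n-1}(x-ia)$. *)

theory Defs
  imports Complex_Main
begin

fun EulN :: "complex \<Rightarrow> complex \<Rightarrow> complex \<Rightarrow> complex \<Rightarrow> nat \<Rightarrow> int \<Rightarrow> complex" where
  "EulN a b c0 ci 0 k = (if k = 0 then 1 else 0)"
| "EulN a b c0 ci (Suc n) k =
     (if k < 0 \<or> k > int (Suc n) then 0 else
        (- a * of_nat n + b * of_int k + c0) * EulN a b c0 ci n k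
      + ((a + b) * of_nat n - b * of_int (k - 1) + ci) * EulN a b c0 ci n (k - 1))"

definition GEuler :: "complex \<Rightarrow> complex \<Rightarrow> complex \<Rightarrow> complex \<Rightarrow> int \<Rightarrow> int \<Rightarrow> complex" where
  "GEuler a b c0 ci n k = (if n < 0 then 0 else EulN a b c0 ci (nat n) k)"

definition gffact :: "complex \<Rightarrow> complex \<Rightarrow> nat \<Rightarrow> complex" where
  "gffact a x n = (\<Prod>i<n. x - of_nat i * a)"

end

theory Submission
  imports Defs
begin

text \<open>Each identity compares two arrays that satisfy one and the same triangular recurrence in
  n (once the parameters are substituted) and agree initially, so it follows by induction on n,
  each step being a polynomial identity in the parameters. In (ii) the two sides obey the same
  recurrence but differ at n = 0, and the correction
  (-1)^k (c_0)^{n,a} binom(n+1, k+1) is itself a solution of that recurrence, by Pascal's rule and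
  (k+1) binom(N, k+1) = (N-k) binom(N, k).\<close>

lemma EulN_eq_0: "k < 0 \<or> k > int n \<Longrightarrow> EulN a b c0 ci n k = 0"
  by (induction n arbitrary: k) auto

lemma EulN_Suc:
  "EulN a b c0 ci (Suc n) k =
     (- a * of_nat n + b * of_int k + c0) * EulN a b c0 ci n k
   + ((a + b) * of_nat n - b * of_int (k - 1) + ci) * EulN a b c0 ci n (k - 1)"
  using EulN_eq_0[of k n a b c0 ci] EulN_eq_0[of "k - 1" n a b c0 ci] by auto

declare EulN.simps(2)[simp del]

lemma EulN_shift_c0_add_a:
  "EulN a b (c0 + a) (ci - a) n k
   = EulN a b c0 ci n k + a * of_nat n * (EulN a b c0 ci (n - 1) k - EulN a b c0 ci (n - 1) (k - 1))"
proof (induction n arbitrary: k)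
  case 0
  then show ?case by simp
next
  case (Suc n)
  show ?case
  proof (cases n)
    case 0
    then show ?thesis using Suc.IH[of k] Suc.IH[of "k - 1"] by (simp add: EulN_Suc algebra_simps)
  next
    case (Suc m)
    have IH: "EulN a b (c0 + a) (ci - a) (Suc m) j
        = EulN a b c0 ci (Suc m) j + a * of_nat (Suc m) * (EulN a b c0 ci m j - EulN a b c0 ci m (j - 1))"
      for j using Suc.IH[of j] Suc by simp
    show ?thesis
      unfolding Suc
      by (simp only: EulN_Suc[of a b "c0 + a" "ci - a" "Suc m"] EulN_Suc[of a b c0 ci "Suc m"] IH
            diff_Suc_1 EulN_Suc[of a b c0 ci m]) (simp add: algebra_simps)
  qed
qed

lemma EulN_ci_eq_0:
  "c0 * EulN a b (c0 - a) (a + b) n k = EulN a b c0 0 (Suc n) k"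
proof (induction n arbitrary: k)
  case 0
  then show ?case by (simp add: EulN_Suc)
next
  case (Suc n)
  show ?case
    by (simp only: EulN_Suc[of a b c0 0 "Suc n"] EulN_Suc[of a b "c0 - a" "a + b" n] Suc.IH[symmetric])
      (simp add: algebra_simps)
qed

lemma EulN_c0_eq_0:
  "ci * EulN a b (b - a) (ci + a) n k = EulN a b 0 ci (Suc n) (k + 1)"
proof (induction n arbitrary: k)
  case 0
  then show ?case by (cases "k = -1") (auto simp: EulN_Suc)
next
  case (Suc n)
  have IH': "EulN a b 0 ci (Suc n) k = ci * EulN a b (b - a) (ci + a) n (k - 1)"
    using Suc.IH[of "k - 1"] by simp
  show ?case
    by (simp only: EulN_Suc[of a b 0 ci "Suc n"] EulN_Suc[of a b "b - a" "ci + a" n] Suc.IH[symmetric])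
      (simp add: IH' algebra_simps)
qed

lemma EulN_ci_eq_uminus_c0:
  "c * (EulN a b (c - a) (a - c) n (k + 1) - EulN a b (c - a) (a - c) n k)
   = EulN a b c (- c) (Suc n) (k + 1)"
proof (induction n arbitrary: k)
  case 0
  then show ?case by (cases "k = -1") (auto simp: EulN_Suc)
next
  case (Suc n)
  have IH': "EulN a b c (- c) (Suc n) k
      = c * (EulN a b (c - a) (a - c) n k - EulN a b (c - a) (a - c) n (k - 1))"
    using Suc.IH[of "k - 1"] by simp
  show ?case
    by (simp only: EulN_Suc[of a b c "- c" "Suc n"] EulN_Suc[of a b "c - a" "a - c" n] Suc.IH[symmetric])
      (simp add: IH' algebra_simps)
qed

lemma gffact_Suc: "gffact a x (Suc n) = gffact a x n * (x - of_nat n * a)"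
  by (simp add: gffact_def)

lemma of_nat_Suc_times_binomial:
  "(of_nat k + 1) * of_nat (N choose Suc k) = (of_nat N - of_nat k) * (of_nat (N choose k) :: 'a::comm_ring_1)"
proof (cases "k < N")
  case True
  then obtain m where N: "N = Suc (k + m)"
    using less_imp_Suc_add by blast
  have "Suc k * (N choose Suc k) = Suc m * (N choose k)"
    unfolding N by (rule Suc_times_binomial_add)
  then have "(of_nat (Suc k) * of_nat (N choose Suc k) :: 'a) = of_nat (Suc m) * of_nat (N choose k)"
    by (metis of_nat_mult)
  then show ?thesis
    by (simp add: N algebra_simps)
qed (cases "k = N"; simp add: binomial_eq_0)

text \<open>The guard is needed: for k < -1 the binomial coefficient would be binom(n+1, 0) = 1.\<close>

definition alt_binomial_term :: "complex \<Rightarrow> complex \<Rightarrow> nat \<Rightarrow> int \<Rightarrow> complex" where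
  "alt_binomial_term a x n k =
     (if k < -1 then 0 else (-1) powi k * gffact a x n * of_nat ((n + 1) choose nat (k + 1)))"

lemma alt_binomial_term_Suc:
  "alt_binomial_term a x (Suc n) k
   = (- a * of_nat n + b * (of_int k + 1) + x) * alt_binomial_term a x n k
   + ((a + b) * of_nat n - b * of_int k + b - x) * alt_binomial_term a x n (k - 1)"
proof -
  consider "k < -1" | "k = -1" | j where "k = int j"
  proof (cases "k \<ge> 0")
    case True
    then show ?thesis using that(3) nonneg_int_cases by blast
  next
    case False
    then show ?thesis using that(1,2) by linarith
  qed
  then show ?thesis
  proof cases
    case 1
    then show ?thesis by (simp add: alt_binomial_term_def)
  next
    case 2
    then show ?thesis by (simp add: alt_binomial_term_def gffact_Suc algebra_simps)
  next
    case 3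
    define P where "P = (-1) ^ j * gffact a x n"
    define C where "C i = (of_nat (Suc n choose i) :: complex)" for i
    have nat_k: "nat (k + 1) = Suc j" "nat (k - 1 + 1) = j" using 3 by auto
    have D_Suc: "alt_binomial_term a x (Suc n) k = P * (x - of_nat n * a) * (C (Suc j) + C j)"
      using 3 nat_k by (simp add: alt_binomial_term_def P_def C_def gffact_Suc algebra_simps)
    have D: "alt_binomial_term a x n k = P * C (Suc j)"
      using 3 nat_k by (simp add: alt_binomial_term_def P_def C_def)
    have D_pred: "alt_binomial_term a x n (k - 1) = - P * C j"
    proof (cases j)
      case 0
      then show ?thesis using 3 by (simp add: alt_binomial_term_def P_def C_def)
    next
      case (Suc i)
      then have "k - 1 = int i" using 3 by simp
      then show ?thesis using Suc nat_k by (simp add: alt_binomial_term_def P_def C_def)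
    qed
    have absorb: "(of_nat j + 1) * C (Suc j) = (of_nat (Suc n) - of_nat j) * C j"
      unfolding C_def by (rule of_nat_Suc_times_binomial)
    have "(- a * of_nat n + b * (of_int k + 1) + x) * (P * C (Suc j))
        + ((a + b) * of_nat n - b * of_int k + b - x) * (- P * C j)
        - P * (x - of_nat n * a) * (C (Suc j) + C j)
        = b * P * ((of_nat j + 1) * C (Suc j) - (of_nat (Suc n) - of_nat j) * C j)"
      using 3 by (simp add: algebra_simps)
    then show ?thesis
      unfolding D_Suc D D_pred absorb by simp
  qed
qed

lemma EulN_c0_add_b:
  "EulN a b (c0 + b) (- c0) n k = EulN a b c0 (b - c0) n (k + 1) + alt_binomial_term a c0 n k"
proof (induction n arbitrary: k)
  case 0
  consider "k < -1" | "k = -1" | "k = 0" | "k > 0" by linarith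
  then show ?case by cases (auto simp: alt_binomial_term_def gffact_def)
next
  case (Suc n)
  have IH': "EulN a b (c0 + b) (- c0) n (k - 1) = EulN a b c0 (b - c0) n k + alt_binomial_term a c0 n (k - 1)"
    using Suc.IH[of "k - 1"] by simp
  show ?case
    by (simp only: EulN_Suc[of a b "c0 + b" "- c0" n] EulN_Suc[of a b c0 "b - c0" n]
          alt_binomial_term_Suc[of a c0 n k b] Suc.IH IH') (simp add: algebra_simps)
qed

lemma GEuler_of_nat: "GEuler a b c0 ci (int n) k = EulN a b c0 ci n k"
  by (simp add: GEuler_def)

lemma GEuler_of_nat_add_1: "GEuler a b c0 ci (int n + 1) k = EulN a b c0 ci (Suc n) k"
  by (simp add: GEuler_def nat_add_distrib)

lemma GEuler_of_nat_diff_1: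
  "GEuler a b c0 ci (int n - 1) k = (if n = 0 then 0 else EulN a b c0 ci (n - 1) k)"
  by (simp add: GEuler_def nat_diff_distrib)

theorem mainTheorem16:
  fixes a b c0 ci c :: complex and n :: nat
  shows
   "(\<forall>k::int. 0 \<le> k \<and> k \<le> int n \<longrightarrow>
      GEuler a b (c0 + a) (ci - a) (int n) k
      = GEuler a b c0 ci (int n) k
        + a * of_nat n * (GEuler a b c0 ci (int n - 1) k - GEuler a b c0 ci (int n - 1) (k - 1)))
  \<and> (\<forall>k::int. -1 \<le> k \<and> k \<le> int n \<longrightarrow>
      GEuler a b (c0 + b) (- c0) (int n) k
      = GEuler a b c0 (b - c0) (int n) (k + 1)
        + (-1) powi k * gffact a c0 n * of_nat ((n + 1) choose nat (k + 1)))
  \<and> (\<forall>k::int. -1 \<le> k \<and> k \<le> int n \<longrightarrow>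
      ci * GEuler a b (b - a) (ci + a) (int n) k = GEuler a b 0 ci (int n + 1) (k + 1))
  \<and> (\<forall>k::int. 0 \<le> k \<and> k \<le> int n \<longrightarrow>
      c0 * GEuler a b (c0 - a) (a + b) (int n) k = GEuler a b c0 0 (int n + 1) k)
  \<and> (\<forall>k::int. -1 \<le> k \<and> k \<le> int n \<longrightarrow>
      c * (GEuler a b (c - a) (a - c) (int n) (k + 1) - GEuler a b (c - a) (a - c) (int n) k)
      = GEuler a b c (- c) (int n + 1) (k + 1))"
  unfolding GEuler_of_nat GEuler_of_nat_add_1 GEuler_of_nat_diff_1
proof (intro conjI allI impI)
  fix k :: int
  show "EulN a b (c0 + a) (ci - a) n k = EulN a b c0 ci n k + a * of_nat n *
      ((if n = 0 then 0 else EulN a b c0 ci (n - 1) k) - (if n = 0 then 0 else EulN a b c0 ci (n - 1) (k - 1)))"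
    using EulN_shift_c0_add_a[of a b c0 ci n k] by simp
next
  fix k :: int
  assume "-1 \<le> k \<and> k \<le> int n"
  then show "EulN a b (c0 + b) (- c0) n k = EulN a b c0 (b - c0) n (k + 1)
      + (-1) powi k * gffact a c0 n * of_nat ((n + 1) choose nat (k + 1))"
    using EulN_c0_add_b[of a b c0 n k] by (simp add: alt_binomial_term_def)
qed (simp_all add: EulN_c0_eq_0 EulN_ci_eq_0 EulN_ci_eq_uminus_c0)

end
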